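(* If $\Gamma_G$ is population monotonic, then $G$ has no induced subgraph isomorphic to the path $P_5$ (five vertices, four edges forming a path) and no induced subgraph isomorphic to the cycle $C_5$.
   Context: $G=(V,E;w)$ is a finite simple graph with edge weights $w:E\to\mathbb{R}$, $w_e>0$ for all $e\in E$. The matching game on $G$ is the cooperative game $\Gamma_G=(N,\gamma)$ with player set $N=V$ and, for $S\subseteq N$, $\gamma(S)$ equal to the maximum weight of a matching in the induced subgraph $G[S]$ (so $\gamma(\emptyset)=0$). A population monotonic allocation scheme (PMAS) is a family $(\boldsymbol{x}_S)_{\emptyset\neq S\subseteq N}$ with $\boldsymbol{x}_S=(x_{S,i})_{i\in S}\in\mathbb{R}^S$ such that (efficiency) $\sum_{i\in S}x_{S,i}=\gamma(S)$ for every nonempty $S\subseteq N$, and (monotonicity) $x_{S,i}\le x_{T,i}$ whenever $\emptyset\ne S\subseteq T\subseteq N$ and $i\in S$. $\Gamma_G$ is called population monotonic if it admits a PMAS. *)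

theory Defs
  imports Complex_Main
begin

definition simple_graph :: "'a set \<Rightarrow> 'a set set \<Rightarrow> bool" where
  "simple_graph V E \<longleftrightarrow> finite V \<and> (\<forall>e\<in>E. \<exists>u v. e = {u, v} \<and> u \<noteq> v \<and> u \<in> V \<and> v \<in> V)"

definition matching_in :: "'a set set \<Rightarrow> 'a set \<Rightarrow> 'a set set \<Rightarrow> bool" where
  "matching_in E S M \<longleftrightarrow> M \<subseteq> E \<and> (\<forall>e\<in>M. e \<subseteq> S) \<and>
     (\<forall>e\<in>M. \<forall>f\<in>M. e \<noteq> f \<longrightarrow> e \<inter> f = {})"

definition gamma :: "'a set set \<Rightarrow> ('a set \<Rightarrow> real) \<Rightarrow> 'a set \<Rightarrow> real" where
  "gamma E w S = Max {sum w M | M. matching_in E S M}"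

definition is_PMAS :: "'a set \<Rightarrow> 'a set set \<Rightarrow> ('a set \<Rightarrow> real) \<Rightarrow> ('a set \<Rightarrow> 'a \<Rightarrow> real) \<Rightarrow> bool" where
  "is_PMAS V E w x \<longleftrightarrow>
     (\<forall>S. S \<subseteq> V \<and> S \<noteq> {} \<longrightarrow> (\<Sum>i\<in>S. x S i) = gamma E w S) \<and>
     (\<forall>S T i. S \<noteq> {} \<and> S \<subseteq> T \<and> T \<subseteq> V \<and> i \<in> S \<longrightarrow> x S i \<le> x T i)"

definition population_monotonic :: "'a set \<Rightarrow> 'a set set \<Rightarrow> ('a set \<Rightarrow> real) \<Rightarrow> bool" where
  "population_monotonic V E w \<longleftrightarrow> (\<exists>x. is_PMAS V E w x)"

definition has_induced_copy :: "'a set \<Rightarrow> 'a set set \<Rightarrow> 'b set \<Rightarrow> 'b set set \<Rightarrow> bool" where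
  "has_induced_copy V E VH EH \<longleftrightarrow>
     (\<exists>f. inj_on f VH \<and> f ` VH \<subseteq> V \<and>
          (\<forall>u\<in>VH. \<forall>v\<in>VH. {f u, f v} \<in> E \<longleftrightarrow> {u, v} \<in> EH))"

definition P5_edges :: "nat set set" where
  "P5_edges = {{0,1},{1,2},{2,3},{3,4}}"

definition C5_edges :: "nat set set" where
  "C5_edges = {{0,1},{1,2},{2,3},{3,4},{4,0}}"

end

theory Submission
  imports Defs
begin

text \<open>
  Along an induced path \<open>u - v - z\<close> the coalition \<open>{u, v, z}\<close> can only use one of its two
  edges.  If \<open>uv\<close> is the heavier one, monotonicity forces \<open>z\<close> to get nothing in the coalition
  \<open>{v, z}\<close>, so \<open>v\<close> collects all of \<open>w(vz)\<close> there, and the shares of \<open>u\<close> in \<open>{u, v}\<close> and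
  of \<open>v\<close> in \<open>{v, z}\<close> together fit into \<open>w(uv)\<close>.  Both \<open>P\<^sub>5\<close> and \<open>C\<^sub>5\<close> contain a path
  \<open>v\<^sub>0 \<dots> v\<^sub>4\<close> whose three sub-paths of length two are induced.  If, say, \<open>v\<^sub>1v\<^sub>2\<close> is at
  least as heavy as \<open>v\<^sub>2v\<^sub>3\<close>, then \<open>v\<^sub>2\<close> gets all of \<open>w(v\<^sub>2v\<^sub>3) > 0\<close> in \<open>{v\<^sub>2, v\<^sub>3}\<close>; comparing
  \<open>v\<^sub>2v\<^sub>3\<close> with \<open>v\<^sub>3v\<^sub>4\<close> then gives a contradiction in either case.
\<close>

lemma simple_graph_finite_edges:
  assumes "simple_graph V E"
  shows "finite E"
proof -
  have "E \<subseteq> Pow V"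
  proof
    fix e assume "e \<in> E"
    then obtain u v where "e = {u, v}" "u \<in> V" "v \<in> V"
      using assms unfolding simple_graph_def by meson
    then show "e \<in> Pow V"
      by simp
  qed
  moreover have "finite V"
    using assms unfolding simple_graph_def by blast
  ultimately show ?thesis
    by (meson finite_Pow_iff rev_finite_subset)
qed

lemma finite_matching_weights:
  assumes "finite E"
  shows "finite {sum w M | M. matching_in E S M}"
proof -
  have "{sum w M | M. matching_in E S M} \<subseteq> sum w ` Pow E"
    unfolding matching_in_def by blast
  then show ?thesis
    using assms by (meson finite_Pow_iff finite_imageI rev_finite_subset)
qed

lemma matching_in_empty: "matching_in E S {}"
  unfolding matching_in_def by simp

lemma matching_weight_le_gamma:
  assumes "finite E" and "matching_in E S M"
  shows "sum w M \<le> gamma E w S"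
  unfolding gamma_def using assms by (intro Max_ge finite_matching_weights) auto

lemma gamma_nonneg:
  assumes "finite E"
  shows "0 \<le> gamma E w S"
  using matching_weight_le_gamma[OF assms matching_in_empty, of w] by simp

lemma gamma_le:
  assumes "finite E" and "\<And>M. matching_in E S M \<Longrightarrow> sum w M \<le> c"
  shows "gamma E w S \<le> c"
  unfolding gamma_def
proof (subst Max_le_iff)
  show "finite {sum w M | M. matching_in E S M}"
    using assms(1) by (rule finite_matching_weights)
  show "{sum w M | M. matching_in E S M} \<noteq> {}"
    using matching_in_empty by blast
  show "\<forall>a\<in>{sum w M | M. matching_in E S M}. a \<le> c"
    using assms(2) by blast
qed

lemma edge_le_gamma:
  assumes "finite E" and "{u, v} \<in> E"
  shows "w {u, v} \<le> gamma E w {u, v}"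
  using matching_weight_le_gamma[OF assms(1), of "{u, v}" "{{u, v}}" w] assms(2)
  by (simp add: matching_in_def)

lemma gamma_induced_path3:
  assumes "simple_graph V E" and "{u, v} \<in> E" "{v, z} \<in> E" "{u, z} \<notin> E"
    and "u \<noteq> v" "v \<noteq> z" "u \<noteq> z" and "\<forall>e\<in>E. w e > 0"
  shows "gamma E w {u, v, z} \<le> max (w {u, v}) (w {v, z})"
proof (rule gamma_le[OF simple_graph_finite_edges[OF assms(1)]])
  fix M assume M: "matching_in E {u, v, z} M"
  have M_sub: "M \<subseteq> {{u, v}, {v, z}}"
  proof
    fix e assume "e \<in> M"
    then have "e \<in> E" "e \<subseteq> {u, v, z}"
      using M unfolding matching_in_def by auto
    moreover obtain a b where e: "e = {a, b}" "a \<noteq> b"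
      using assms(1) \<open>e \<in> E\<close> unfolding simple_graph_def by meson
    ultimately have "a = u \<or> a = v \<or> a = z" "b = u \<or> b = v \<or> b = z"
      by auto
    then show "e \<in> {{u, v}, {v, z}}"
      using e \<open>e \<in> E\<close> assms(4) by (elim disjE) (simp_all add: insert_commute)
  qed
  have not_both: "{v, z} \<notin> M" if "{u, v} \<in> M"
  proof
    assume "{v, z} \<in> M"
    moreover have "{u, v} \<noteq> {v, z}"
      using assms(5-7) by (simp add: doubleton_eq_iff)
    ultimately have "{u, v} \<inter> {v, z} = {}"
      using M that unfolding matching_in_def by simp
    then show False
      by simp
  qed
  have "M = {} \<or> M = {{u, v}} \<or> M = {{v, z}}"
  proof (cases "{u, v} \<in> M")
    case True
    then have "M \<subseteq> {{u, v}}"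
      using M_sub not_both by auto
    then show ?thesis
      using True by auto
  next
    case False
    then have "M \<subseteq> {{v, z}}"
      using M_sub by auto
    then show ?thesis
      by auto
  qed
  moreover have "0 < w {u, v}"
    using assms(2,8) by blast
  ultimately show "sum w M \<le> max (w {u, v}) (w {v, z})"
    by auto
qed

locale matching_game_PMAS =
  fixes V :: "'a set" and E :: "'a set set" and w :: "'a set \<Rightarrow> real"
    and x :: "'a set \<Rightarrow> 'a \<Rightarrow> real"
  assumes graph: "simple_graph V E"
    and weights_pos: "\<forall>e\<in>E. w e > 0"
    and PMAS: "is_PMAS V E w x"
begin

lemma finite_edges: "finite E"
  using graph by (rule simple_graph_finite_edges)

lemma efficient: "S \<subseteq> V \<Longrightarrow> S \<noteq> {} \<Longrightarrow> (\<Sum>i\<in>S. x S i) = gamma E w S"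
  using PMAS unfolding is_PMAS_def by blast

lemma monotone: "i \<in> S \<Longrightarrow> S \<subseteq> T \<Longrightarrow> T \<subseteq> V \<Longrightarrow> x S i \<le> x T i"
  using PMAS unfolding is_PMAS_def by blast

lemma share_nonneg:
  assumes "i \<in> S" "S \<subseteq> V"
  shows "0 \<le> x S i"
proof -
  have "0 \<le> x {i} i"
    using efficient[of "{i}"] gamma_nonneg[OF finite_edges, of w "{i}"] assms by auto
  also have "\<dots> \<le> x S i"
    using monotone assms by blast
  finally show ?thesis .
qed

lemma edge_shares_ge:
  assumes "{u, v} \<in> E" "u \<in> V" "v \<in> V" "u \<noteq> v"
  shows "w {u, v} \<le> x {u, v} u + x {u, v} v"
  using efficient[of "{u, v}"] edge_le_gamma[OF finite_edges assms(1)] assms(2-4) by simp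

lemma induced_path3_shares:
  assumes "{u, v} \<in> E" "{v, z} \<in> E" "{u, z} \<notin> E"
    and "u \<in> V" "v \<in> V" "z \<in> V" "u \<noteq> v" "v \<noteq> z" "u \<noteq> z"
    and heavier: "w {v, z} \<le> w {u, v}"
  shows "x {v, z} z = 0" and "x {u, v} u + x {v, z} v \<le> w {u, v}"
proof -
  let ?T = "{u, v, z}"
  have "x ?T u + x ?T v + x ?T z = gamma E w ?T"
    using efficient[of ?T] assms(4-9) by (simp add: algebra_simps)
  also have "\<dots> \<le> w {u, v}"
    using gamma_induced_path3[OF graph assms(1-3,7-9) weights_pos] heavier by simp
  finally have T: "x ?T u + x ?T v + x ?T z \<le> w {u, v}" .
  have "x {u, v} u \<le> x ?T u" "x {u, v} v \<le> x ?T v" "x {v, z} v \<le> x ?T v" "x {v, z} z \<le> x ?T z"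
    using assms(4-6) by (auto intro!: monotone)
  moreover have "0 \<le> x {v, z} z"
    using assms(5,6) by (auto intro: share_nonneg)
  moreover have "w {u, v} \<le> x {u, v} u + x {u, v} v"
    using edge_shares_ge assms(1,4,5,7) by blast
  ultimately show "x {v, z} z = 0" and "x {u, v} u + x {v, z} v \<le> w {u, v}"
    using T by linarith+
qed

lemma no_path5_with_heavier_second_edge:
  assumes V: "v\<^sub>0 \<in> V" "v\<^sub>1 \<in> V" "v\<^sub>2 \<in> V" "v\<^sub>3 \<in> V" "v\<^sub>4 \<in> V"
    and distinct: "distinct [v\<^sub>0, v\<^sub>1, v\<^sub>2, v\<^sub>3, v\<^sub>4]"
    and edges: "{v\<^sub>0, v\<^sub>1} \<in> E" "{v\<^sub>1, v\<^sub>2} \<in> E" "{v\<^sub>2, v\<^sub>3} \<in> E" "{v\<^sub>3, v\<^sub>4} \<in> E"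
    and non_edges: "{v\<^sub>0, v\<^sub>2} \<notin> E" "{v\<^sub>1, v\<^sub>3} \<notin> E" "{v\<^sub>2, v\<^sub>4} \<notin> E"
    and heavier: "w {v\<^sub>2, v\<^sub>3} \<le> w {v\<^sub>1, v\<^sub>2}"
  shows False
proof -
  have "x {v\<^sub>2, v\<^sub>3} v\<^sub>3 = 0"
    using induced_path3_shares(1)[of v\<^sub>1 v\<^sub>2 v\<^sub>3] assms by simp
  then have x23: "w {v\<^sub>2, v\<^sub>3} \<le> x {v\<^sub>2, v\<^sub>3} v\<^sub>2"
    using edge_shares_ge[of v\<^sub>2 v\<^sub>3] assms by simp
  have pos: "0 < w {v\<^sub>2, v\<^sub>3}" "0 < w {v\<^sub>3, v\<^sub>4}"
    using weights_pos edges by auto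
  show False
  proof (cases "w {v\<^sub>3, v\<^sub>4} \<le> w {v\<^sub>2, v\<^sub>3}")
    case True
    have "x {v\<^sub>3, v\<^sub>4} v\<^sub>4 = 0" "x {v\<^sub>2, v\<^sub>3} v\<^sub>2 + x {v\<^sub>3, v\<^sub>4} v\<^sub>3 \<le> w {v\<^sub>2, v\<^sub>3}"
      using induced_path3_shares[of v\<^sub>2 v\<^sub>3 v\<^sub>4] True assms by simp_all
    moreover have "w {v\<^sub>3, v\<^sub>4} \<le> x {v\<^sub>3, v\<^sub>4} v\<^sub>3 + x {v\<^sub>3, v\<^sub>4} v\<^sub>4"
      using edge_shares_ge[of v\<^sub>3 v\<^sub>4] assms by simp
    ultimately show False
      using x23 pos by linarith
  next
    case False
    have "{v\<^sub>4, v\<^sub>3} \<in> E" "{v\<^sub>3, v\<^sub>2} \<in> E" "{v\<^sub>4, v\<^sub>2} \<notin> E" "w {v\<^sub>3, v\<^sub>2} \<le> w {v\<^sub>4, v\<^sub>3}"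
      using edges non_edges False by (simp_all add: insert_commute)
    then have "x {v\<^sub>3, v\<^sub>2} v\<^sub>2 = 0"
      using induced_path3_shares(1)[of v\<^sub>4 v\<^sub>3 v\<^sub>2] V distinct by auto
    then have "x {v\<^sub>2, v\<^sub>3} v\<^sub>2 = 0"
      by (simp add: insert_commute)
    then show False
      using x23 pos by linarith
  qed
qed

lemma no_path5_with_induced_subpaths:
  assumes "v\<^sub>0 \<in> V" "v\<^sub>1 \<in> V" "v\<^sub>2 \<in> V" "v\<^sub>3 \<in> V" "v\<^sub>4 \<in> V"
    and "distinct [v\<^sub>0, v\<^sub>1, v\<^sub>2, v\<^sub>3, v\<^sub>4]"
    and "{v\<^sub>0, v\<^sub>1} \<in> E" "{v\<^sub>1, v\<^sub>2} \<in> E" "{v\<^sub>2, v\<^sub>3} \<in> E" "{v\<^sub>3, v\<^sub>4} \<in> E"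
    and "{v\<^sub>0, v\<^sub>2} \<notin> E" "{v\<^sub>1, v\<^sub>3} \<notin> E" "{v\<^sub>2, v\<^sub>4} \<notin> E"
  shows False
proof (cases "w {v\<^sub>2, v\<^sub>3} \<le> w {v\<^sub>1, v\<^sub>2}")
  case True
  with assms show False
    by (rule no_path5_with_heavier_second_edge)
next
  case False
  have "distinct [v\<^sub>4, v\<^sub>3, v\<^sub>2, v\<^sub>1, v\<^sub>0]"
    using assms(6) by auto
  moreover have
    "{v\<^sub>4, v\<^sub>3} \<in> E" "{v\<^sub>3, v\<^sub>2} \<in> E" "{v\<^sub>2, v\<^sub>1} \<in> E" "{v\<^sub>1, v\<^sub>0} \<in> E"
    "{v\<^sub>4, v\<^sub>2} \<notin> E" "{v\<^sub>3, v\<^sub>1} \<notin> E" "{v\<^sub>2, v\<^sub>0} \<notin> E"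
    "w {v\<^sub>2, v\<^sub>1} \<le> w {v\<^sub>3, v\<^sub>2}"
    using assms(7-13) False by (simp_all add: insert_commute)
  ultimately show False
    using assms(5,4,3,2,1) by (rule no_path5_with_heavier_second_edge[rotated 5])
qed

lemma no_induced_copy_with_path5:
  fixes EH :: "nat set set"
  assumes "{0, 1} \<in> EH" "{1, 2} \<in> EH" "{2, 3} \<in> EH" "{3, 4} \<in> EH"
    and "{0, 2} \<notin> EH" "{1, 3} \<notin> EH" "{2, 4} \<notin> EH"
  shows "\<not> has_induced_copy V E {0..<5} EH"
proof
  assume "has_induced_copy V E {0..<5} EH"
  then obtain f where f: "inj_on f {0..<5}" "f ` {0..<5} \<subseteq> V"
    "\<forall>u\<in>{0..<5}. \<forall>v\<in>{0..<5}. {f u, f v} \<in> E \<longleftrightarrow> {u, v} \<in> EH"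
    unfolding has_induced_copy_def by blast
  show False
  proof (rule no_path5_with_induced_subpaths)
    show "f 0 \<in> V" "f 1 \<in> V" "f 2 \<in> V" "f 3 \<in> V" "f 4 \<in> V"
      using f(2) by auto
    show "distinct [f 0, f 1, f 2, f 3, f 4]"
      by (simp add: inj_on_eq_iff[OF f(1)])
    show "{f 0, f 1} \<in> E" "{f 1, f 2} \<in> E" "{f 2, f 3} \<in> E" "{f 3, f 4} \<in> E"
      "{f 0, f 2} \<notin> E" "{f 1, f 3} \<notin> E" "{f 2, f 4} \<notin> E"
      using f(3) assms by auto
  qed
qed

end

theorem mainTheorem10:
  fixes V :: "'a set" and E :: "'a set set" and w :: "'a set \<Rightarrow> real"
  assumes "simple_graph V E"
    and "\<forall>e\<in>E. w e > 0"
    and "population_monotonic V E w"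
  shows "\<not> has_induced_copy V E {0..<5::nat} P5_edges \<and> \<not> has_induced_copy V E {0..<5::nat} C5_edges"
proof -
  obtain x where "is_PMAS V E w x"
    using assms(3) unfolding population_monotonic_def by blast
  then interpret matching_game_PMAS V E w x
    using assms(1,2) by unfold_locales
  have "\<not> has_induced_copy V E {0..<5} P5_edges"
    by (rule no_induced_copy_with_path5) (simp_all add: P5_edges_def doubleton_eq_iff)
  moreover have "\<not> has_induced_copy V E {0..<5} C5_edges"
    by (rule no_induced_copy_with_path5) (simp_all add: C5_edges_def doubleton_eq_iff)
  ultimately show ?thesis
    by blast
qed

end
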